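(* There is an absolute constant $C>0$ such that for every undirected graph $G=(V,E,\omega)$ on $n$ vertices with positive edge weights and every integer $k\ge 1$, there exists a weighted edge set $H$ on $V$ with at most $C\,k\, n^{1+1/(2^k-1)}$ edges which, for every $0<\epsilon<1$ simultaneously, is a $(\beta,\epsilon)$-hopset of $G$ with $\beta=\left(Ck/\epsilon\right)^{k-1}$.
   Context: For a weighted graph $F$ and positive integer $\beta$, $d^{(\beta)}_F(u,v)$ denotes the minimum length of a $u$–$v$ path in $F$ with at most $\beta$ edges. A weighted edge set $H$ on $V$ (weights $\omega_H(u,v)\ge d_G(u,v)$) is a $(\beta,\epsilon)$-hopset of $G$ if for all $u,v\in V$, $d_G(u,v)\le d^{(\beta)}_{G\cup H}(u,v)\le(1+\epsilon)d_G(u,v)$, where $G\cup H$ has edge set $E\cup H$. *)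

theory Defs
  imports Complex_Main "HOL-Library.Extended_Real"
begin

text \<open>Undirected weighted graphs: an edge set is a set of 2-element vertex sets,
  weights are a function on edges.\<close>

definition edges_on :: "'a set \<Rightarrow> 'a set set" where
  "edges_on V = {{u, v} | u v. u \<in> V \<and> v \<in> V \<and> u \<noteq> v}"

definition is_walk :: "'a set set \<Rightarrow> 'a \<Rightarrow> 'a \<Rightarrow> 'a list \<Rightarrow> bool" where
  "is_walk F u v xs \<longleftrightarrow> xs \<noteq> [] \<and> hd xs = u \<and> last xs = v \<and>
     (\<forall>i. Suc i < length xs \<longrightarrow> {xs ! i, xs ! Suc i} \<in> F)"

definition walk_len :: "('a set \<Rightarrow> real) \<Rightarrow> 'a list \<Rightarrow> real" where
  "walk_len w xs = (\<Sum>i<length xs - 1. w {xs ! i, xs ! Suc i})"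

definition walk_hops :: "'a list \<Rightarrow> nat" where
  "walk_hops xs = length xs - 1"

text \<open>Shortest-path distance (infinite if no path).\<close>
definition graph_dist :: "'a set set \<Rightarrow> ('a set \<Rightarrow> real) \<Rightarrow> 'a \<Rightarrow> 'a \<Rightarrow> ereal" where
  "graph_dist F w u v = Inf {ereal (walk_len w xs) | xs. is_walk F u v xs}"

definition hop_dist :: "'a set set \<Rightarrow> ('a set \<Rightarrow> real) \<Rightarrow> real \<Rightarrow> 'a \<Rightarrow> 'a \<Rightarrow> ereal" where
  "hop_dist F w \<beta> u v =
     Inf {ereal (walk_len w xs) | xs. is_walk F u v xs \<and> real (walk_hops xs) \<le> \<beta>}"

definition union_weight ::
  "'a set set \<Rightarrow> ('a set \<Rightarrow> real) \<Rightarrow> 'a set set \<Rightarrow> ('a set \<Rightarrow> real) \<Rightarrow> 'a set \<Rightarrow> real" where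
  "union_weight E w H wH e =
     (if e \<in> E \<and> e \<in> H then min (w e) (wH e) else if e \<in> E then w e else wH e)"

definition is_hopset ::
  "'a set \<Rightarrow> 'a set set \<Rightarrow> ('a set \<Rightarrow> real) \<Rightarrow> 'a set set \<Rightarrow> ('a set \<Rightarrow> real)
     \<Rightarrow> real \<Rightarrow> real \<Rightarrow> bool" where
  "is_hopset V E w H wH \<beta> \<epsilon> \<longleftrightarrow>
     H \<subseteq> edges_on V \<and>
     (\<forall>u v. {u, v} \<in> H \<longrightarrow> graph_dist E w u v \<le> ereal (wH {u, v})) \<and>
     (\<forall>u\<in>V. \<forall>v\<in>V.
        graph_dist E w u v \<le> hop_dist (E \<union> H) (union_weight E w H wH) \<beta> u v \<and>
        hop_dist (E \<union> H) (union_weight E w H wH) \<beta> u v \<le> ereal (1 + \<epsilon>) * graph_dist E w u v)"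

end

theory Submission
  imports Defs
begin

text \<open>The construction follows Thorup and Zwick. Levels \<open>V = A 0 \<supseteq> A 1 \<supseteq> \<dots> \<supseteq> A (k - 1)\<close>
  with \<open>A i\<close> of size about \<open>n powr (1 - (2 ^ i - 1) / (2 ^ k - 1))\<close> are chosen by averaging over all
  subsets of the right size; this bounds the total size of the bunches (the vertices of \<open>A i\<close>
  closer to \<open>x\<close> than all of \<open>A (i + 1)\<close>) by \<open>4 n powr (1 + 1 / (2 ^ k - 1))\<close> per level. The hopset
  joins every vertex to its nearest vertex (pivot) in each level and to its bunches, with distances
  as weights.

  The hop bound is an induction on \<open>i\<close>: every walk of length \<open>l\<close> is either approximated within
  stretch \<open>1 + 12 \<delta> i\<close> by \<open>(2 / \<delta> + 9) ^ i\<close> hops, or both of its ends have a level-\<open>(i + 1)\<close>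
  pivot within distance \<open>3 l\<close>. For the step, cut the walk into pieces of length about \<open>\<delta> l\<close> and
  approximate them inductively from both ends; where this gets stuck, the two stuck vertices have
  close pivots, which are joined by a bunch edge unless their own next pivots are close. For
  \<open>\<delta> = \<epsilon> / (12 k)\<close> and \<open>i = k - 1\<close> the second alternative is impossible.\<close>

lemma is_walk_Nil [simp]: "\<not> is_walk F u v []"
  by (simp add: is_walk_def)

lemma is_walk_singleton [simp]: "is_walk F u v [x] \<longleftrightarrow> u = x \<and> v = x"
  by (auto simp: is_walk_def)

lemma is_walk_Cons_Cons:
  "is_walk F u v (x # y # zs) \<longleftrightarrow> u = x \<and> {x, y} \<in> F \<and> is_walk F y v (y # zs)"
proof -
  have "(\<forall>i. Suc i < length (x # y # zs) \<longrightarrow> {(x # y # zs) ! i, (x # y # zs) ! Suc i} \<in> F) \<longleftrightarrow>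
        {x, y} \<in> F \<and> (\<forall>i. Suc i < length (y # zs) \<longrightarrow> {(y # zs) ! i, (y # zs) ! Suc i} \<in> F)"
    by (auto simp: less_Suc_eq_0_disj)
  then show ?thesis
    by (auto simp: is_walk_def)
qed

lemma walk_len_singleton [simp]: "walk_len w [x] = 0"
  by (simp add: walk_len_def)

lemma walk_len_Cons_Cons [simp]: "walk_len w (x # y # zs) = w {x, y} + walk_len w (y # zs)"
  unfolding walk_len_def by (simp add: sum.lessThan_Suc_shift del: sum.lessThan_Suc)

lemma walk_hops_singleton [simp]: "walk_hops [x] = 0"
  by (simp add: walk_hops_def)

lemma walk_hops_Cons_Cons [simp]: "walk_hops (x # y # zs) = Suc (walk_hops (y # zs))"
  by (simp add: walk_hops_def)

lemma is_walk_hd_last: "is_walk F u v xs \<Longrightarrow> xs \<noteq> [] \<and> hd xs = u \<and> last xs = v"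
  by (simp add: is_walk_def)

lemma is_walk_join:
  assumes "is_walk F x y P" "is_walk F y z Q"
  shows "is_walk F x z (P @ tl Q) \<and> walk_len w (P @ tl Q) = walk_len w P + walk_len w Q \<and>
    walk_hops (P @ tl Q) = walk_hops P + walk_hops Q"
  using assms(1)
proof (induction P arbitrary: x rule: induct_list012)
  case (2 a)
  then have "Q = y # tl Q"
    using is_walk_hd_last[OF assms(2)] by (cases Q) auto
  then show ?case
    using 2 assms(2) by (metis add_0 append_Cons append_Nil is_walk_singleton walk_hops_singleton
        walk_len_singleton)
next
  case (3 a b zs)
  then have "x = a" "{a, b} \<in> F" "is_walk F b y (b # zs)"
    by (simp_all add: is_walk_Cons_Cons)
  with "3.IH"(2)[OF this(3)] show ?case
    by (simp add: is_walk_Cons_Cons)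
qed simp

lemma is_walk_split:
  assumes "is_walk F x y (P @ b # Q)"
  shows "is_walk F x b (P @ [b]) \<and> is_walk F b y (b # Q) \<and>
    walk_len w (P @ b # Q) = walk_len w (P @ [b]) + walk_len w (b # Q)"
  using assms
proof (induction P arbitrary: x rule: induct_list012)
  case 1
  then show ?case
    using is_walk_hd_last[OF 1] by simp
next
  case (2 a)
  then show ?case
    by (simp add: is_walk_Cons_Cons)
next
  case (3 a c zs)
  then have "x = a" "{a, c} \<in> F" "is_walk F c y ((c # zs) @ b # Q)"
    by (simp_all add: is_walk_Cons_Cons)
  with "3.IH"(2)[OF this(3)] show ?case
    by (simp add: is_walk_Cons_Cons)
qed

lemma is_walk_rev:
  assumes "is_walk F x y P"
  shows "is_walk F y x (rev P) \<and> walk_len w (rev P) = walk_len w P \<and> walk_hops (rev P) = walk_hops P"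
  using assms
proof (induction P arbitrary: x rule: induct_list012)
  case (3 a b zs)
  then have IH: "is_walk F y b (rev (b # zs)) \<and> walk_len w (rev (b # zs)) = walk_len w (b # zs) \<and>
      walk_hops (rev (b # zs)) = walk_hops (b # zs)" and "{b, a} \<in> F" "x = a"
    by (auto simp: is_walk_Cons_Cons insert_commute)
  then have "is_walk F b a [b, a]"
    by (simp add: is_walk_Cons_Cons)
  from is_walk_join[OF conjunct1[OF IH] this, of w] IH \<open>x = a\<close> show ?case
    by (simp add: insert_commute)
qed auto

lemma walk_len_nonneg: "is_walk F x y xs \<Longrightarrow> \<forall>e\<in>F. 0 \<le> w e \<Longrightarrow> 0 \<le> walk_len w xs"
proof (induction xs arbitrary: x rule: induct_list012)
  case (3 a b zs)
  then show ?case
    by (fastforce simp: is_walk_Cons_Cons)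
qed auto

lemma walk_len_pos:
  assumes "is_walk F x y xs" "\<forall>e\<in>F. 0 < w e" "x \<noteq> y"
  shows "0 < walk_len w xs"
proof -
  obtain a b zs where xs: "xs = a # b # zs"
    using assms by (metis is_walk_Nil is_walk_singleton list.exhaust)
  then have "{a, b} \<in> F" "is_walk F b y (b # zs)"
    using assms by (auto simp: is_walk_Cons_Cons)
  moreover have "0 \<le> walk_len w (b # zs)"
    using calculation assms by (intro walk_len_nonneg) (auto simp: less_imp_le)
  ultimately show ?thesis
    using xs assms by (simp add: add_pos_nonneg)
qed

lemma walk_vertices_subset:
  assumes "is_walk F x y xs" "F \<subseteq> edges_on V" "x \<noteq> y"
  shows "set xs \<subseteq> V"
proof -
  have "set xs \<subseteq> V" if "is_walk F x y xs" "2 \<le> length xs" for x xs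
    using that
  proof (induction xs arbitrary: x rule: induct_list012)
    case (3 a b zs)
    then have "{a, b} \<in> edges_on V" "is_walk F b y (b # zs)"
      using assms(2) by (auto simp: is_walk_Cons_Cons)
    moreover from this(1) have "a \<in> V" "b \<in> V"
      by (auto simp: edges_on_def doubleton_eq_iff)
    ultimately show ?case
      using 3 by (cases zs) auto
  qed auto
  moreover have "2 \<le> length xs"
    using assms(1,3) by (cases xs rule: remdups_adj.cases) auto
  ultimately show ?thesis
    using assms(1) by blast
qed

lemma walk_suffix_threshold:
  assumes "W \<noteq> []" "0 < t"
  shows "walk_len w W \<le> t \<or>
    (\<exists>P c q R. W = P @ c # q # R \<and> walk_len w (q # R) \<le> t \<and> t < walk_len w (c # q # R))"
  using assms(1)
proof (induction W)
  case (Cons a W)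
  show ?case
  proof (cases "walk_len w (a # W) \<le> t \<or> W = []")
    case False
    then have "walk_len w W \<le> t \<or>
        (\<exists>P c q R. W = P @ c # q # R \<and> walk_len w (q # R) \<le> t \<and> t < walk_len w (c # q # R))"
      using Cons.IH by blast
    then show ?thesis
    proof
      assume "walk_len w W \<le> t"
      then show ?thesis
        using False by (cases W) (auto intro!: exI[of _ "[]"])
    next
      assume "\<exists>P c q R. W = P @ c # q # R \<and> walk_len w (q # R) \<le> t \<and> t < walk_len w (c # q # R)"
      then show ?thesis
        by (metis append_Cons)
    qed
  qed (use assms(2) in auto)
qed simp

lemma graph_dist_le_walk: "is_walk F x y xs \<Longrightarrow> graph_dist F w x y \<le> ereal (walk_len w xs)"
  unfolding graph_dist_def by (rule Inf_lower) blast

lemma graph_dist_less_obtain_walk: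
  assumes "graph_dist F w x y < ereal r"
  obtains xs where "is_walk F x y xs" "walk_len w xs < r"
  using assms unfolding graph_dist_def Inf_less_iff by auto

lemma graph_dist_nonneg: "\<forall>e\<in>F. 0 \<le> w e \<Longrightarrow> 0 \<le> graph_dist F w x y"
  unfolding graph_dist_def by (rule Inf_greatest) (auto intro: walk_len_nonneg)

lemma graph_dist_commute: "graph_dist F w x y = graph_dist F w y x"
proof -
  have *: "{ereal (walk_len w xs) | xs. is_walk F a b xs} \<subseteq> {ereal (walk_len w xs) | xs. is_walk F b a xs}"
    for a b
    using is_walk_rev[of F a b _ w] by (smt (verit) mem_Collect_eq subsetI)
  show ?thesis
    unfolding graph_dist_def using *[of x y] *[of y x] by (rule arg_cong[OF subset_antisym])
qed

lemma graph_dist_triangle: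
  assumes "graph_dist F w x y \<le> ereal a" "graph_dist F w y z \<le> ereal b"
  shows "graph_dist F w x z \<le> ereal (a + b)"
proof (rule ereal_le_epsilon2)
  fix e :: real
  assume "0 < e"
  then have "graph_dist F w x y < ereal (a + e/2)" "graph_dist F w y z < ereal (b + e/2)"
    using assms by (simp_all add: le_less_trans)
  then obtain P Q where "is_walk F x y P" "walk_len w P < a + e/2"
    and "is_walk F y z Q" "walk_len w Q < b + e/2"
    by (meson graph_dist_less_obtain_walk)
  with is_walk_join[of F x y P z Q w] have "graph_dist F w x z \<le> ereal (walk_len w P + walk_len w Q)"
    by (metis graph_dist_le_walk)
  also have "\<dots> \<le> ereal (a + b) + ereal e"
    using \<open>walk_len w P < a + e/2\<close> \<open>walk_len w Q < b + e/2\<close> by simp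
  finally show "graph_dist F w x z \<le> ereal (a + b) + ereal e" .
qed

lemma le_graph_dist_scaled:
  assumes c: "0 < c" and walks: "\<And>P. is_walk F u v P \<Longrightarrow> X \<le> ereal (c * walk_len w P)"
    and nonneg: "0 \<le> graph_dist F w u v"
  shows "X \<le> ereal c * graph_dist F w u v"
proof (cases "graph_dist F w u v")
  case (real D)
  show ?thesis
  proof (rule ereal_le_epsilon2)
    fix \<eta> :: real
    assume "0 < \<eta>"
    then have "graph_dist F w u v < ereal (D + \<eta> / c)"
      using real c by simp
    then obtain P where "is_walk F u v P" "walk_len w P < D + \<eta> / c"
      by (rule graph_dist_less_obtain_walk)
    then have "X \<le> ereal (c * (D + \<eta> / c))"
      using walks[of P] c by (meson ereal_less_eq(3) mult_left_mono less_imp_le order.trans)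
    also have "\<dots> = ereal c * graph_dist F w u v + ereal \<eta>"
      using real c by (simp add: distrib_left)
    finally show "X \<le> ereal c * graph_dist F w u v + ereal \<eta>" .
  qed
qed (use c nonneg in simp_all)

definition hop_walk :: "'a set set \<Rightarrow> ('a set \<Rightarrow> real) \<Rightarrow> real \<Rightarrow> 'a \<Rightarrow> 'a \<Rightarrow> real \<Rightarrow> bool" where
  "hop_walk F w b x y L \<longleftrightarrow> (\<exists>xs. is_walk F x y xs \<and> real (walk_hops xs) \<le> b \<and> walk_len w xs \<le> L)"

lemma hop_walk_refl: "0 \<le> b \<Longrightarrow> 0 \<le> L \<Longrightarrow> hop_walk F w b x x L"
  unfolding hop_walk_def by (rule exI[of _ "[x]"]) simp

lemma hop_walk_mono: "hop_walk F w b x y L \<Longrightarrow> b \<le> b' \<Longrightarrow> L \<le> L' \<Longrightarrow> hop_walk F w b' x y L'"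
  unfolding hop_walk_def by force

lemma hop_walk_edge: "{x, y} \<in> F \<Longrightarrow> hop_walk F w 1 x y (w {x, y})"
  unfolding hop_walk_def by (rule exI[of _ "[x, y]"]) (simp add: is_walk_Cons_Cons)

lemma hop_walk_commute: "hop_walk F w b x y L \<Longrightarrow> hop_walk F w b y x L"
  unfolding hop_walk_def by (metis is_walk_rev)

lemma hop_walk_trans:
  "hop_walk F w b1 x y L1 \<Longrightarrow> hop_walk F w b2 y z L2 \<Longrightarrow> hop_walk F w (b1 + b2) x z (L1 + L2)"
  unfolding hop_walk_def by (smt (verit) is_walk_join of_nat_add)

lemma hop_dist_le_hop_walk: "hop_walk F w b x y L \<Longrightarrow> hop_dist F w b x y \<le> ereal L"
  unfolding hop_walk_def hop_dist_def by (smt (verit) Inf_lower ereal_less_eq(3) mem_Collect_eq order_trans)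

lemma hop_budget_extend:
  fixes h s m r t :: real
  assumes "0 < t" "1 \<le> h" "t < m + r"
  shows "h * (2 * s / t + 2) + 1 + h \<le> h * (2 * (s + m + r) / t + 2)"
proof -
  have "1 \<le> (m + r) / t"
    using assms(1,3) by simp
  then have "h \<le> h * ((m + r) / t)"
    using assms(2) by (metis mult.right_neutral mult_left_mono order_trans zero_le_one)
  moreover have "h * (2 * (s + m + r) / t + 2) = h * (2 * s / t + 2) + 2 * (h * ((m + r) / t))"
    using assms(1) by (simp add: field_simps)
  ultimately show ?thesis
    using assms(2) by linarith
qed

section \<open>Hopsets from a hierarchy of pivots and bunches\<close>

text \<open>The structure behind Thorup--Zwick emulators: levels \<open>A 0 = V, A 1, \<dots>, A (k - 1)\<close>,
  pivots \<open>piv j u\<close> nearest to \<open>u\<close> in \<open>A j\<close>, and a set \<open>H\<close> of shortcut edges weighted by true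
  distances that joins every vertex to its pivots and every \<open>x \<in> A i\<close> to each \<open>y \<in> A i\<close> strictly
  closer to \<open>x\<close> than its next pivot (the bunch of \<open>x\<close>).\<close>

locale pivot_hierarchy =
  fixes V :: "'a set" and E :: "'a set set" and w :: "'a set \<Rightarrow> real"
    and H :: "'a set set" and wH :: "'a set \<Rightarrow> real" and k :: nat
    and A :: "nat \<Rightarrow> 'a set" and piv :: "nat \<Rightarrow> 'a \<Rightarrow> 'a"
  assumes edges_subset: "E \<subseteq> edges_on V" and weights_pos: "\<forall>e\<in>E. 0 < w e"
    and shortcuts_subset: "H \<subseteq> edges_on V"
    and shortcut_weight: "\<And>x y. {x, y} \<in> H \<Longrightarrow>
      graph_dist E w x y < \<infinity> \<and> ereal (wH {x, y}) = graph_dist E w x y"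
    and pivot_mem: "\<And>j u. j < k \<Longrightarrow> piv j u \<in> A j"
    and pivot_nearest: "\<And>j u z. j < k \<Longrightarrow> z \<in> A j \<Longrightarrow> graph_dist E w u (piv j u) \<le> graph_dist E w u z"
    and pivot_shortcut: "\<And>u j. u \<in> V \<Longrightarrow> j < k \<Longrightarrow>
      u = piv j u \<or> {u, piv j u} \<in> H \<or> graph_dist E w u (piv j u) = \<infinity>"
    and bunch_shortcut: "\<And>i x y. i < k \<Longrightarrow> x \<in> A i \<Longrightarrow> y \<in> A i \<Longrightarrow> graph_dist E w x y < \<infinity> \<Longrightarrow>
      x = y \<or> {x, y} \<in> H \<or> (Suc i < k \<and> graph_dist E w x (piv (Suc i) x) \<le> graph_dist E w x y)"
    and level_0: "A 0 = V"
begin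

abbreviation "d \<equiv> graph_dist E w"
abbreviation "wEH \<equiv> union_weight E w H wH"
abbreviation "hwalk \<equiv> hop_walk (E \<union> H) wEH"

lemma weights_nonneg: "\<forall>e\<in>E. 0 \<le> w e"
  using weights_pos by (simp add: less_imp_le)

lemma dist_nonneg: "0 \<le> d x y"
  using graph_dist_nonneg[OF weights_nonneg] .

lemma nonneg_if_dist_le: "d x y \<le> ereal r \<Longrightarrow> 0 \<le> r"
  using dist_nonneg[of x y] by (metis ereal_less_eq(5) order_trans)

lemma hwalk_of_walk: "is_walk E x y P \<Longrightarrow> hwalk (walk_hops P) x y (walk_len w P)"
proof (induction P arbitrary: x rule: induct_list012)
  case (2 a)
  then show ?case
    by (auto intro: hop_walk_refl)
next
  case (3 a b zs)
  then have ab: "{a, b} \<in> E" "x = a" and "is_walk E b y (b # zs)"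
    by (auto simp: is_walk_Cons_Cons)
  have "hwalk 1 a b (wEH {a, b})"
    using ab by (intro hop_walk_edge) simp
  moreover have "wEH {a, b} \<le> w {a, b}"
    using ab by (simp add: union_weight_def)
  ultimately have "hwalk 1 a b (w {a, b})"
    by (rule hop_walk_mono[OF _ order.refl])
  from hop_walk_trans[OF this "3.IH"(2)[OF \<open>is_walk E b y (b # zs)\<close>]] show ?case
    using ab by simp
qed auto

lemma hwalk_shortcut:
  assumes "{x, y} \<in> H" "d x y \<le> ereal r"
  shows "hwalk 1 x y r"
proof (rule hop_walk_mono[OF hop_walk_edge order.refl])
  show "{x, y} \<in> E \<union> H"
    using assms(1) by simp
  have "wH {x, y} \<le> r"
    using shortcut_weight[OF assms(1)] assms(2) by (metis ereal_less_eq(3))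
  then show "wEH {x, y} \<le> r"
    using assms(1) by (auto simp: union_weight_def)
qed

lemma hwalk_pivot:
  assumes "u \<in> V" "j < k" "d u (piv j u) \<le> ereal r"
  shows "hwalk 1 u (piv j u) r"
  using pivot_shortcut[OF assms(1,2)]
proof (elim disjE)
  assume "u = piv j u"
  then show ?thesis
    using hop_walk_refl[of 1 r] nonneg_if_dist_le[OF assms(3)] by (metis zero_le_one)
qed (use assms(3) hwalk_shortcut in auto)

lemma pivot_dist_le: "j < k \<Longrightarrow> z \<in> A j \<Longrightarrow> d x z \<le> r \<Longrightarrow> d x (piv j x) \<le> r"
  using pivot_nearest order_trans by blast

lemma same_level_cases:
  assumes "i < k" "x \<in> A i" "y \<in> A i" "d x y \<le> ereal r"
  shows "hwalk 1 x y r \<or> (Suc i < k \<and> d x (piv (Suc i) x) \<le> d x y \<and> d y (piv (Suc i) y) \<le> d x y)"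
proof -
  have "d x y < \<infinity>" "d y x = d x y"
    using assms(4) graph_dist_commute[of E w x y] by (auto simp: le_less_trans)
  then have "x = y \<or> {x, y} \<in> H \<or> (Suc i < k \<and> d x (piv (Suc i) x) \<le> d x y)"
    and "y = x \<or> {y, x} \<in> H \<or> (Suc i < k \<and> d y (piv (Suc i) y) \<le> d x y)"
    using bunch_shortcut[OF assms(1,2,3)] bunch_shortcut[OF assms(1,3,2)] by auto
  then show ?thesis
    using assms(4) nonneg_if_dist_le[OF assms(4)]
    by (auto simp: insert_commute intro: hop_walk_refl hwalk_shortcut)
qed

definition pivots_close :: "nat \<Rightarrow> 'a \<Rightarrow> 'a \<Rightarrow> real \<Rightarrow> bool" where
  "pivots_close j x y L \<longleftrightarrow> j < k \<and> d x (piv j x) \<le> ereal (3 * L) \<and> d y (piv j y) \<le> ereal (3 * L)"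

lemma hwalk_or_pivots_level_0:
  assumes "0 < k" and W: "is_walk E x y W"
  shows "hwalk 1 x y (walk_len w W) \<or> pivots_close (Suc 0) x y (walk_len w W)"
proof (cases "x = y")
  case True
  then show ?thesis
    using hop_walk_refl walk_len_nonneg[OF W weights_nonneg] by (metis zero_le_one)
next
  case False
  then have "set W \<subseteq> V" "x \<in> set W" "y \<in> set W"
    using walk_vertices_subset[OF W edges_subset] is_walk_hd_last[OF W] by (auto intro: hd_in_set last_in_set)
  then have "x \<in> A 0" "y \<in> A 0"
    using level_0 by auto
  moreover have dxy: "d x y \<le> ereal (walk_len w W)"
    using graph_dist_le_walk[OF W] .
  moreover have "ereal (walk_len w W) \<le> ereal (3 * walk_len w W)"
    using walk_len_nonneg[OF W weights_nonneg] by simp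
  ultimately show ?thesis
    using same_level_cases[OF assms(1)] unfolding pivots_close_def by (meson order_trans)
qed

lemma bridge_pivots:
  assumes j: "j < k" and "a \<in> V" "b \<in> V"
    and xa: "hwalk B1 x a L1" and b_y: "hwalk B2 b y L2"
    and pa: "d a (piv j a) \<le> ereal (3 * t)" and pb: "d b (piv j b) \<le> ereal (3 * t)"
    and ab: "d a b \<le> ereal m" and xa_dist: "d x a \<le> ereal sa" and yb_dist: "d y b \<le> ereal r"
  shows "hwalk (B1 + B2 + 3) x y (L1 + L2 + 12 * t + m) \<or>
    Suc j < k \<and> d x (piv (Suc j) x) \<le> ereal (sa + 9 * t + m) \<and> d y (piv (Suc j) y) \<le> ereal (r + 9 * t + m)"
proof -
  let ?pa = "piv j a" and ?pb = "piv j b"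
  have pa': "d ?pa a \<le> ereal (3 * t)"
    using pa graph_dist_commute by metis
  have "d ?pa ?pb \<le> ereal (3 * t + m + 3 * t)"
    using graph_dist_triangle[OF graph_dist_triangle[OF pa' ab] pb] .
  then have papb: "d ?pa ?pb \<le> ereal (6 * t + m)"
    by (simp add: algebra_simps)
  from same_level_cases[OF j pivot_mem[OF j] pivot_mem[OF j] papb] show ?thesis
  proof
    assume "hwalk 1 ?pa ?pb (6 * t + m)"
    moreover have "hwalk 1 a ?pa (3 * t)" "hwalk 1 ?pb b (3 * t)"
      using hwalk_pivot[OF \<open>a \<in> V\<close> j pa] hop_walk_commute[OF hwalk_pivot[OF \<open>b \<in> V\<close> j pb]] .
    ultimately have "hwalk (B1 + 1 + 1 + 1 + B2) x y (L1 + 3 * t + (6 * t + m) + 3 * t + L2)"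
      using xa b_y by (meson hop_walk_trans)
    then show ?thesis
      by (simp add: algebra_simps)
  next
    assume far: "Suc j < k \<and> d ?pa (piv (Suc j) ?pa) \<le> d ?pa ?pb \<and> d ?pb (piv (Suc j) ?pb) \<le> d ?pa ?pb"
    have "d ?pb (piv (Suc j) ?pb) \<le> ereal (6 * t + m)" "d ?pa (piv (Suc j) ?pa) \<le> ereal (6 * t + m)"
      using far papb by (meson order_trans)+
    then have "d x (piv (Suc j) ?pa) \<le> ereal (sa + (3 * t + (6 * t + m)))"
      and "d y (piv (Suc j) ?pb) \<le> ereal (r + (3 * t + (6 * t + m)))"
      using graph_dist_triangle[OF xa_dist graph_dist_triangle[OF pa]]
        graph_dist_triangle[OF yb_dist graph_dist_triangle[OF pb]] by blast+
    then have "d x (piv (Suc j) x) \<le> ereal (sa + (3 * t + (6 * t + m)))"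
      and "d y (piv (Suc j) y) \<le> ereal (r + (3 * t + (6 * t + m)))"
      using far pivot_mem pivot_dist_le by meson+
    with far show ?thesis
      by (simp add: algebra_simps)
  qed
qed

text \<open>Within this context, walks of length at most \<open>t\<close> are already approximated with \<open>h\<close> hops
  unless both of their ends have a close level-\<open>j\<close> pivot; this is the induction hypothesis of
  \<open>hwalk_approx\<close> below. A longer walk is cut into pieces of length about \<open>t\<close> joined by single
  graph edges, which costs \<open>h\<close> hops per piece and no stretch on the joining edges.\<close>

context
  fixes j :: nat and h e t :: real
  assumes t_pos: "0 < t" and h_ge_1: "1 \<le> h" and e_nonneg: "0 \<le> e"
    and short_walks: "\<And>u v Q. is_walk E u v Q \<Longrightarrow> walk_len w Q \<le> t \<Longrightarrow>
      hwalk h u v ((1 + e) * walk_len w Q) \<or> pivots_close j u v (walk_len w Q)"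
begin

definition prefix_to_pivot :: "'a \<Rightarrow> 'a list \<Rightarrow> bool" where
  "prefix_to_pivot x W \<longleftrightarrow> (\<exists>P a Q. W = P @ a # Q \<and>
    hwalk (h * (2 * walk_len w (P @ [a]) / t + 2) + 1) x a ((1 + e) * walk_len w (P @ [a])) \<and>
    d a (piv j a) \<le> ereal (3 * t))"

lemma prefix_to_pivot_append: "prefix_to_pivot x P \<Longrightarrow> prefix_to_pivot x (P @ Q)"
  unfolding prefix_to_pivot_def by fastforce

lemma extend_by_piece:
  assumes xc: "hwalk (h * (2 * walk_len w P / t + 2)) x c ((1 + e) * walk_len w P)"
    and P: "is_walk E x c P" and cq: "{c, q} \<in> E" and Q: "is_walk E q y Q" "walk_len w Q \<le> t"
    and long: "t < w {c, q} + walk_len w Q"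
  shows "hwalk (h * (2 * walk_len w (P @ Q) / t + 2)) x y ((1 + e) * walk_len w (P @ Q)) \<or>
    prefix_to_pivot x (P @ Q)"
proof -
  let ?s = "walk_len w P" and ?m = "w {c, q}" and ?r = "walk_len w Q"
  have "0 < ?m"
    using cq weights_pos by auto
  have cq_walk: "is_walk E c q [c, q]"
    using cq by (simp add: is_walk_Cons_Cons)
  then have Pq: "is_walk E x q (P @ [q])" "walk_len w (P @ [q]) = ?s + ?m"
    using is_walk_join[OF P cq_walk, of w] by simp_all
  have "Q = q # tl Q"
    using is_walk_hd_last[OF Q(1)] by (cases Q) auto
  then have PQ: "P @ Q = P @ q # tl Q" "walk_len w (P @ Q) = ?s + ?m + ?r"
    using is_walk_join[OF Pq(1) Q(1), of w] Pq(2) by (metis append.assoc append_Cons append_Nil)+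
  have "hwalk 1 c q ?m"
    using hwalk_of_walk[OF cq_walk] by simp
  with xc have xq: "hwalk (h * (2 * ?s / t + 2) + 1) x q ((1 + e) * ?s + ?m)"
    by (rule hop_walk_trans)
  from short_walks[OF Q] show ?thesis
  proof
    assume "hwalk h q y ((1 + e) * ?r)"
    with xq have "hwalk (h * (2 * ?s / t + 2) + 1 + h) x y ((1 + e) * ?s + ?m + (1 + e) * ?r)"
      by (rule hop_walk_trans)
    moreover have "h * (2 * ?s / t + 2) + 1 + h \<le> h * (2 * (?s + ?m + ?r) / t + 2)"
      by (rule hop_budget_extend[OF t_pos h_ge_1 long])
    moreover have "(1 + e) * ?s + ?m + (1 + e) * ?r \<le> (1 + e) * (?s + ?m + ?r)"
      using e_nonneg \<open>0 < ?m\<close> by (simp add: algebra_simps)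
    ultimately have "hwalk (h * (2 * (?s + ?m + ?r) / t + 2)) x y ((1 + e) * (?s + ?m + ?r))"
      by (rule hop_walk_mono)
    then show ?thesis
      unfolding PQ(2) by (rule disjI1)
  next
    assume "pivots_close j q y ?r"
    then have "d q (piv j q) \<le> ereal (3 * t)"
      unfolding pivots_close_def using Q(2) by (meson ereal_less_eq(3) mult_left_mono order_trans zero_le_numeral)
    moreover have "h * (2 * ?s / t + 2) + 1 \<le> h * (2 * (?s + ?m) / t + 2) + 1"
      using h_ge_1 t_pos \<open>0 < ?m\<close> by (simp add: divide_right_mono)
    moreover have "(1 + e) * ?s + ?m \<le> (1 + e) * (?s + ?m)"
      using e_nonneg \<open>0 < ?m\<close> by (simp add: algebra_simps)
    ultimately show ?thesis
      unfolding prefix_to_pivot_def PQ(1) Pq(2)[symmetric] using hop_walk_mono[OF xq] by blast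
  qed
qed

lemma segment_cover:
  "is_walk E x y W \<Longrightarrow>
    hwalk (h * (2 * walk_len w W / t + 2)) x y ((1 + e) * walk_len w W) \<or> prefix_to_pivot x W"
proof (induction "length W" arbitrary: W y rule: less_induct)
  case less
  let ?l = "walk_len w W"
  have "W \<noteq> []" "W = [] @ x # tl W"
    using is_walk_hd_last[OF less.prems] by (cases W; simp)+
  from walk_suffix_threshold[OF \<open>W \<noteq> []\<close> t_pos] consider
      (short) "?l \<le> t"
    | (long) P c q R where "W = P @ c # q # R" "walk_len w (q # R) \<le> t" "t < walk_len w (c # q # R)"
    by blast
  then show ?case
  proof cases
    case short
    from short_walks[OF less.prems short] show ?thesis
    proof
      assume "hwalk h x y ((1 + e) * ?l)"
      moreover have "h \<le> h * (2 * ?l / t + 2)"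
        using h_ge_1 walk_len_nonneg[OF less.prems weights_nonneg] t_pos by (simp add: algebra_simps)
      ultimately show ?thesis
        by (blast intro: hop_walk_mono)
    next
      assume "pivots_close j x y ?l"
      then have "d x (piv j x) \<le> ereal (3 * t)"
        unfolding pivots_close_def using short
        by (meson ereal_less_eq(3) mult_left_mono order_trans zero_le_numeral)
      moreover have "hwalk (h * (2 * walk_len w ([] @ [x]) / t + 2) + 1) x x ((1 + e) * walk_len w ([] @ [x]))"
        using h_ge_1 by (intro hop_walk_refl) auto
      ultimately show ?thesis
        unfolding prefix_to_pivot_def using \<open>W = [] @ x # tl W\<close> by blast
    qed
  next
    case long
    then have W: "W = (P @ [c]) @ (q # R)"
      by simp
    have "is_walk E x c (P @ [c])" "is_walk E c y (c # q # R)"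
      using is_walk_split[of E x y P c "q # R" w] less.prems long(1) by auto
    moreover have "length (P @ [c]) < length W"
      using long(1) by simp
    ultimately have "hwalk (h * (2 * walk_len w (P @ [c]) / t + 2)) x c ((1 + e) * walk_len w (P @ [c])) \<or>
        prefix_to_pivot x (P @ [c])" and "{c, q} \<in> E" "is_walk E q y (q # R)"
      using less.hyps by (simp_all add: is_walk_Cons_Cons)
    then show ?thesis
      using extend_by_piece[OF _ \<open>is_walk E x c (P @ [c])\<close> _ _ long(2)] long(3) prefix_to_pivot_append
      unfolding W by fastforce
  qed
qed

lemma prefix_to_pivot_obtain:
  assumes "prefix_to_pivot x W" and W: "is_walk E x y W"
  obtains a s Q where "set (a # Q) \<subseteq> set W" "is_walk E a y (a # Q)" "s + walk_len w (a # Q) = walk_len w W"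
    "0 \<le> s" "d x a \<le> ereal s" "hwalk (h * (2 * s / t + 2) + 1) x a ((1 + e) * s)" "d a (piv j a) \<le> ereal (3 * t)"
proof -
  obtain P a Q where PaQ: "W = P @ a # Q"
    and xa: "hwalk (h * (2 * walk_len w (P @ [a]) / t + 2) + 1) x a ((1 + e) * walk_len w (P @ [a]))"
    and pa: "d a (piv j a) \<le> ereal (3 * t)"
    using assms(1) unfolding prefix_to_pivot_def by blast
  have split: "is_walk E x a (P @ [a])" "is_walk E a y (a # Q)"
    "walk_len w W = walk_len w (P @ [a]) + walk_len w (a # Q)"
    using is_walk_split[of E x y P a Q w] W PaQ by auto
  show ?thesis
  proof (rule that[OF _ split(2) split(3)[symmetric] _ graph_dist_le_walk[OF split(1)] xa pa])
    show "set (a # Q) \<subseteq> set W"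
      using PaQ by auto
    show "0 \<le> walk_len w (P @ [a])"
      using walk_len_nonneg[OF split(1) weights_nonneg] .
  qed
qed

definition pivot_bridge :: "'a \<Rightarrow> 'a \<Rightarrow> real \<Rightarrow> bool" where
  "pivot_bridge x y l \<longleftrightarrow> (\<exists>a b sa m r. a \<in> V \<and> b \<in> V \<and> sa + m + r = l \<and> 0 \<le> sa \<and> 0 \<le> m \<and> 0 \<le> r \<and>
    hwalk (h * (2 * sa / t + 2) + 1) x a ((1 + e) * sa) \<and> hwalk (h * (2 * r / t + 2) + 1) b y ((1 + e) * r) \<and>
    d a b \<le> ereal m \<and> d x a \<le> ereal sa \<and> d y b \<le> ereal r \<and>
    d a (piv j a) \<le> ereal (3 * t) \<and> d b (piv j b) \<le> ereal (3 * t))"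

lemma two_sided_cover:
  assumes W: "is_walk E x y W" and "x \<noteq> y"
  shows "hwalk (h * (2 * walk_len w W / t + 4) + 1) x y ((1 + e) * walk_len w W) \<or>
    pivot_bridge x y (walk_len w W)"
proof -
  let ?l = "walk_len w W"
  from segment_cover[OF W] show ?thesis
  proof
    assume "hwalk (h * (2 * ?l / t + 2)) x y ((1 + e) * ?l)"
    moreover have "h * (2 * ?l / t + 2) \<le> h * (2 * ?l / t + 4) + 1"
      using h_ge_1 by (simp add: algebra_simps)
    ultimately show ?thesis
      by (intro disjI1) (rule hop_walk_mono[OF _ _ order.refl])
  next
    assume "prefix_to_pivot x W"
    then obtain a sa Q where aQ: "set (a # Q) \<subseteq> set W" "is_walk E a y (a # Q)"
      and sum: "sa + walk_len w (a # Q) = ?l" and a: "0 \<le> sa" "d x a \<le> ereal sa"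
      and xa: "hwalk (h * (2 * sa / t + 2) + 1) x a ((1 + e) * sa)" "d a (piv j a) \<le> ereal (3 * t)"
      by (rule prefix_to_pivot_obtain[OF _ W])
    let ?R = "walk_len w (a # Q)"
    have rev: "is_walk E y a (rev (a # Q))" "walk_len w (rev (a # Q)) = ?R"
      using is_walk_rev[OF aQ(2), of w] by auto
    from segment_cover[OF rev(1)] show ?thesis
    proof
      assume "hwalk (h * (2 * walk_len w (rev (a # Q)) / t + 2)) y a ((1 + e) * walk_len w (rev (a # Q)))"
      then have "hwalk (h * (2 * ?R / t + 2)) a y ((1 + e) * ?R)"
        using rev(2) hop_walk_commute by metis
      with xa(1) have "hwalk (h * (2 * sa / t + 2) + 1 + h * (2 * ?R / t + 2)) x y ((1 + e) * sa + (1 + e) * ?R)"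
        by (rule hop_walk_trans)
      moreover have "h * (2 * sa / t + 2) + 1 + h * (2 * ?R / t + 2) = h * (2 * ?l / t + 4) + 1"
        and "(1 + e) * sa + (1 + e) * ?R = (1 + e) * ?l"
        unfolding sum[symmetric] by (simp_all add: algebra_simps add_divide_distrib[symmetric])
      ultimately show ?thesis
        by simp
    next
      assume "prefix_to_pivot y (rev (a # Q))"
      then obtain b r Q' where b: "set (b # Q') \<subseteq> set (rev (a # Q))" "is_walk E b a (b # Q')"
        and sum': "r + walk_len w (b # Q') = walk_len w (rev (a # Q))" and r: "0 \<le> r" "d y b \<le> ereal r"
        and yb: "hwalk (h * (2 * r / t + 2) + 1) y b ((1 + e) * r)" "d b (piv j b) \<le> ereal (3 * t)"
        by (rule prefix_to_pivot_obtain[OF _ rev(1)])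
      let ?m = "walk_len w (b # Q')"
      have "a \<in> V" "b \<in> V"
        using aQ(1) b(1) walk_vertices_subset[OF W edges_subset \<open>x \<noteq> y\<close>] by auto
      moreover have "sa + ?m + r = ?l" "0 \<le> ?m"
        using sum sum' rev(2) walk_len_nonneg[OF b(2) weights_nonneg] by auto
      moreover have "d a b \<le> ereal ?m"
        using graph_dist_le_walk[OF b(2)] graph_dist_commute by metis
      moreover have "hwalk (h * (2 * r / t + 2) + 1) b y ((1 + e) * r)"
        using hop_walk_commute[OF yb(1)] .
      ultimately show ?thesis
        unfolding pivot_bridge_def using a xa r yb(2)
        by (intro disjI2 exI[of _ a] exI[of _ b] exI[of _ sa] exI[of _ ?m] exI[of _ r]) blast
    qed
  qed
qed

lemma pivot_bridge_cases:
  assumes j: "j < k" and "pivot_bridge x y l"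
  shows "hwalk (h * (2 * l / t + 4) + 5) x y ((1 + e) * l + 12 * t) \<or>
    Suc j < k \<and> d x (piv (Suc j) x) \<le> ereal (l + 9 * t) \<and> d y (piv (Suc j) y) \<le> ereal (l + 9 * t)"
proof -
  obtain a b sa m r where ab: "a \<in> V" "b \<in> V" and sum: "sa + m + r = l"
    and nonneg: "0 \<le> sa" "0 \<le> m" "0 \<le> r"
    and xa: "hwalk (h * (2 * sa / t + 2) + 1) x a ((1 + e) * sa)"
    and b_y: "hwalk (h * (2 * r / t + 2) + 1) b y ((1 + e) * r)"
    and dists: "d a b \<le> ereal m" "d x a \<le> ereal sa" "d y b \<le> ereal r"
    and pivs: "d a (piv j a) \<le> ereal (3 * t)" "d b (piv j b) \<le> ereal (3 * t)"
    using assms(2) unfolding pivot_bridge_def by blast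
  from bridge_pivots[OF j ab xa b_y pivs dists] show ?thesis
  proof
    assume "hwalk (h * (2 * sa / t + 2) + 1 + (h * (2 * r / t + 2) + 1) + 3) x y
      ((1 + e) * sa + (1 + e) * r + 12 * t + m)"
    moreover have "h * (2 * sa / t + 2) + 1 + (h * (2 * r / t + 2) + 1) + 3 \<le> h * (2 * l / t + 4) + 5"
    proof -
      have "(2 * sa + 2 * r) / t \<le> 2 * l / t"
        using sum nonneg t_pos by (simp add: divide_right_mono)
      then have "h * ((2 * sa + 2 * r) / t) \<le> h * (2 * l / t)"
        using h_ge_1 by (intro mult_left_mono) auto
      then show ?thesis
        by (simp add: algebra_simps add_divide_distrib)
    qed
    moreover have "(1 + e) * sa + (1 + e) * r + 12 * t + m \<le> (1 + e) * l + 12 * t"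
    proof -
      have "(1 + e) * l = (1 + e) * sa + (1 + e) * r + m + e * m"
        unfolding sum[symmetric] by (simp add: algebra_simps)
      then show ?thesis
        using mult_nonneg_nonneg[OF e_nonneg nonneg(2)] by linarith
    qed
    ultimately have "hwalk (h * (2 * l / t + 4) + 5) x y ((1 + e) * l + 12 * t)"
      by (rule hop_walk_mono)
    then show ?thesis
      by (rule disjI1)
  next
    assume "Suc j < k \<and> d x (piv (Suc j) x) \<le> ereal (sa + 9 * t + m) \<and>
      d y (piv (Suc j) y) \<le> ereal (r + 9 * t + m)"
    moreover have "sa + 9 * t + m \<le> l + 9 * t" "r + 9 * t + m \<le> l + 9 * t"
      using sum nonneg by linarith+
    ultimately show ?thesis
      by (meson ereal_less_eq(3) order_trans)
  qed
qed

lemma cover_or_pivots: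
  assumes j: "j < k" and W: "is_walk E x y W"
  shows "hwalk (h * (2 * walk_len w W / t + 4) + 5) x y ((1 + e) * walk_len w W + 12 * t) \<or>
    Suc j < k \<and> d x (piv (Suc j) x) \<le> ereal (walk_len w W + 9 * t) \<and>
      d y (piv (Suc j) y) \<le> ereal (walk_len w W + 9 * t)"
proof -
  let ?l = "walk_len w W"
  have "0 \<le> ?l"
    using walk_len_nonneg[OF W weights_nonneg] .
  show ?thesis
  proof (cases "x = y")
    case True
    have "0 \<le> h * (2 * ?l / t + 4) + 5" "0 \<le> (1 + e) * ?l + 12 * t"
      using h_ge_1 t_pos e_nonneg \<open>0 \<le> ?l\<close> by simp_all
    then show ?thesis
      unfolding True by (intro disjI1 hop_walk_refl)
  next
    case False
    from two_sided_cover[OF W False] show ?thesis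
    proof
      assume "hwalk (h * (2 * ?l / t + 4) + 1) x y ((1 + e) * ?l)"
      moreover have "h * (2 * ?l / t + 4) + 1 \<le> h * (2 * ?l / t + 4) + 5" "(1 + e) * ?l \<le> (1 + e) * ?l + 12 * t"
        using t_pos by simp_all
      ultimately have "hwalk (h * (2 * ?l / t + 4) + 5) x y ((1 + e) * ?l + 12 * t)"
        by (rule hop_walk_mono)
      then show ?thesis
        by (rule disjI1)
    qed (rule pivot_bridge_cases[OF j])
  qed
qed

end

lemma hwalk_approx:
  fixes \<delta> :: real
  assumes \<delta>: "0 < \<delta>" "\<delta> \<le> 1 / 12"
  shows "i < k \<Longrightarrow> is_walk E x y W \<Longrightarrow>
    hwalk ((2 / \<delta> + 9) ^ i) x y ((1 + 12 * \<delta> * i) * walk_len w W) \<or> pivots_close (Suc i) x y (walk_len w W)"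
proof (induction i arbitrary: x y W)
  case 0
  then show ?case
    using hwalk_or_pivots_level_0 by simp
next
  case (Suc i)
  let ?l = "walk_len w W" and ?h = "(2 / \<delta> + 9) ^ i" and ?e = "12 * \<delta> * i"
  have "0 \<le> ?l"
    using walk_len_nonneg[OF Suc.prems(2) weights_nonneg] .
  show ?case
  proof (cases "?l = 0")
    case True
    then show ?thesis
      using hop_walk_refl[of "(2 / \<delta> + 9) ^ Suc i" 0] \<delta> walk_len_pos[OF Suc.prems(2) weights_pos]
      by fastforce
  next
    case False
    then have t: "0 < \<delta> * ?l" "2 * ?l / (\<delta> * ?l) = 2 / \<delta>" "9 * (\<delta> * ?l) \<le> 2 * ?l"
      using \<delta> \<open>0 \<le> ?l\<close> by (auto simp: field_simps)
    have h_e: "1 \<le> ?h" "0 \<le> ?e"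
      using \<delta> by (simp_all add: one_le_power)
    have "hwalk ?h u v ((1 + ?e) * walk_len w Q) \<or> pivots_close (Suc i) u v (walk_len w Q)"
      if "is_walk E u v Q" for u v Q
      using Suc.IH[OF _ that] Suc.prems(1) by simp
    from cover_or_pivots[OF t(1) h_e this Suc.prems] show ?thesis
    proof
      assume "hwalk (?h * (2 * ?l / (\<delta> * ?l) + 4) + 5) x y ((1 + ?e) * ?l + 12 * (\<delta> * ?l))"
      moreover have "?h * (2 * ?l / (\<delta> * ?l) + 4) + 5 \<le> (2 / \<delta> + 9) ^ Suc i"
        using t(2) h_e(1) by (simp add: algebra_simps)
      moreover have "(1 + ?e) * ?l + 12 * (\<delta> * ?l) \<le> (1 + 12 * \<delta> * Suc i) * ?l"
        by (simp add: algebra_simps)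
      ultimately have "hwalk ((2 / \<delta> + 9) ^ Suc i) x y ((1 + 12 * \<delta> * Suc i) * ?l)"
        by (rule hop_walk_mono)
      then show ?thesis
        by (rule disjI1)
    next
      assume "Suc (Suc i) < k \<and> d x (piv (Suc (Suc i)) x) \<le> ereal (?l + 9 * (\<delta> * ?l)) \<and>
        d y (piv (Suc (Suc i)) y) \<le> ereal (?l + 9 * (\<delta> * ?l))"
      moreover have "ereal (?l + 9 * (\<delta> * ?l)) \<le> ereal (3 * ?l)"
        using t(3) by simp
      ultimately show ?thesis
        unfolding pivots_close_def by (meson order_trans)
    qed
  qed
qed

lemma dist_le_union_walk: "is_walk (E \<union> H) x y xs \<Longrightarrow> d x y \<le> ereal (walk_len wEH xs)"
proof (induction xs arbitrary: x rule: induct_list012)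
  case (2 a)
  then show ?case
    using graph_dist_le_walk[of E a a "[a]" w] by simp
next
  case (3 a b zs)
  then have ab: "{a, b} \<in> E \<union> H" "x = a" and "is_walk (E \<union> H) b y (b # zs)"
    by (auto simp: is_walk_Cons_Cons)
  have "d a b \<le> ereal (w {a, b})" if "{a, b} \<in> E"
    using graph_dist_le_walk[of E a b "[a, b]" w] that by (simp add: is_walk_Cons_Cons)
  moreover have "d a b = ereal (wH {a, b})" if "{a, b} \<in> H"
    using shortcut_weight[OF that] by simp
  ultimately have "d a b \<le> ereal (wEH {a, b})"
    using ab(1) by (auto simp: union_weight_def min_def)
  from graph_dist_triangle[OF this "3.IH"(2)[OF \<open>is_walk (E \<union> H) b y (b # zs)\<close>]] show ?case
    using ab(2) by simp
qed simp

lemma is_hopset: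
  fixes \<epsilon> \<beta> :: real
  assumes \<epsilon>: "0 < \<epsilon>" "\<epsilon> < 1" and k: "1 \<le> k" and \<beta>: "(24 * real k / \<epsilon> + 9) ^ (k - 1) \<le> \<beta>"
  shows "is_hopset V E w H wH \<beta> \<epsilon>"
proof -
  define \<delta> where "\<delta> = \<epsilon> / (12 * k)"
  have \<delta>: "0 < \<delta>" "\<delta> \<le> 1 / 12" "2 / \<delta> + 9 = 24 * real k / \<epsilon> + 9" "12 * \<delta> * (k - 1) \<le> \<epsilon>"
    unfolding \<delta>_def using \<epsilon> k by (auto simp: field_simps of_nat_diff)
  have walk: "hop_dist (E \<union> H) wEH \<beta> u v \<le> ereal ((1 + \<epsilon>) * walk_len w P)" if P: "is_walk E u v P" for u v P
  proof -
    have "hwalk ((2 / \<delta> + 9) ^ (k - 1)) u v ((1 + 12 * \<delta> * (k - 1)) * walk_len w P)"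
      using hwalk_approx[OF \<delta>(1,2), of "k - 1" u v P] P k unfolding pivots_close_def by simp
    moreover have "(1 + 12 * \<delta> * (k - 1)) * walk_len w P \<le> (1 + \<epsilon>) * walk_len w P"
      using \<delta>(4) walk_len_nonneg[OF P weights_nonneg] by (intro mult_right_mono) auto
    ultimately have "hwalk \<beta> u v ((1 + \<epsilon>) * walk_len w P)"
      using \<beta> \<delta>(3) hop_walk_mono by (metis of_nat_diff of_nat_1 k)
    then show ?thesis
      by (rule hop_dist_le_hop_walk)
  qed
  have "hop_dist (E \<union> H) wEH \<beta> u v \<le> ereal (1 + \<epsilon>) * d u v" for u v
    using le_graph_dist_scaled[OF _ walk dist_nonneg] \<epsilon> by simp
  moreover have "d u v \<le> hop_dist (E \<union> H) wEH \<beta> u v" for u v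
    unfolding hop_dist_def by (rule Inf_greatest) (auto intro: dist_le_union_walk)
  ultimately show ?thesis
    unfolding is_hopset_def using shortcuts_subset shortcut_weight by simp
qed

end


section \<open>Choosing the levels by averaging\<close>

text \<open>Summed over all \<open>s\<close>-subsets \<open>S\<close>, the length of the prefix of \<open>\<sigma>\<close> avoiding \<open>S\<close> counts the
  \<open>(s + 1)\<close>-subsets of \<open>set \<sigma>\<close>: each of them corresponds to its first element together with
  the remaining \<open>s\<close> ones.\<close>

lemma sum_length_takeWhile_not_in_subsets:
  "distinct \<sigma> \<Longrightarrow>
    (\<Sum>S\<in>{S. S \<subseteq> set \<sigma> \<and> card S = s}. length (takeWhile (\<lambda>z. z \<notin> S) \<sigma>)) = length \<sigma> choose Suc s"
proof (induction \<sigma>)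
  case (Cons a \<sigma>)
  let ?f = "\<lambda>S. length (takeWhile (\<lambda>z. z \<notin> S) (a # \<sigma>))"
  define X where "X = {S. S \<subseteq> set (a # \<sigma>) \<and> card S = s}"
  define X1 where "X1 = {S. S \<subseteq> set \<sigma> \<and> card S = s}"
  have "a \<notin> set \<sigma>" "distinct \<sigma>"
    using Cons.prems by auto
  have "finite X" "X1 \<subseteq> X"
    unfolding X_def X1_def by (auto intro: finite_subset[of _ "Pow (set (a # \<sigma>))"])
  have "sum ?f X = sum ?f X1 + sum ?f (X - X1)"
    using sum.subset_diff[OF \<open>X1 \<subseteq> X\<close> \<open>finite X\<close>] by (simp only: add.commute)
  also have "sum ?f (X - X1) = 0"
    unfolding X_def X1_def by (rule sum.neutral) auto
  also have "sum ?f X1 = (\<Sum>S\<in>X1. Suc (length (takeWhile (\<lambda>z. z \<notin> S) \<sigma>)))"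
    unfolding X1_def using \<open>a \<notin> set \<sigma>\<close> by (intro sum.cong) auto
  also have "\<dots> = card X1 + (\<Sum>S\<in>X1. length (takeWhile (\<lambda>z. z \<notin> S) \<sigma>))"
    by (simp add: sum_Suc)
  also have "card X1 = length \<sigma> choose s"
    unfolding X1_def using n_subsets[of "set \<sigma>" s] distinct_card[OF \<open>distinct \<sigma>\<close>] by simp
  finally show ?case
    unfolding X_def X1_def using Cons.IH[OF \<open>distinct \<sigma>\<close>] by simp
qed simp

lemma exists_card_mult_le_sum:
  fixes f :: "'a \<Rightarrow> nat"
  assumes "finite X" "X \<noteq> {}"
  shows "\<exists>x\<in>X. card X * f x \<le> sum f X"
proof (rule ccontr)
  assume "\<not> ?thesis"
  then have "(\<Sum>x\<in>X. sum f X) < (\<Sum>x\<in>X. card X * f x)"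
    using sum_strict_mono[OF assms] by (metis not_le)
  then show False
    by (simp add: sum_distrib_left)
qed

lemma Suc_mult_choose_Suc_le: "Suc s * (n choose Suc s) \<le> n * (n choose s)"
proof -
  have "Suc s * (n choose Suc s) = n * (n - 1 choose s)"
    by (rule binomial_absorption)
  also have "\<dots> \<le> n * (n choose s)"
    by (intro mult_left_mono binomial_right_mono) auto
  finally show ?thesis .
qed

text \<open>The derandomised sampling step of Thorup and Zwick.\<close>

lemma exists_subset_short_prefixes:
  fixes \<sigma> :: "'a \<Rightarrow> 'a list"
  assumes A: "finite A" and s: "s \<le> card A"
    and \<sigma>: "\<And>x. x \<in> A \<Longrightarrow> distinct (\<sigma> x) \<and> set (\<sigma> x) = A"
  shows "\<exists>S\<subseteq>A. card S = s \<and> Suc s * (\<Sum>x\<in>A. length (takeWhile (\<lambda>z. z \<notin> S) (\<sigma> x))) \<le> card A ^ 2"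
proof -
  define N where "N = card A"
  define X where "X = {S. S \<subseteq> A \<and> card S = s}"
  define g where "g S = (\<Sum>x\<in>A. length (takeWhile (\<lambda>z. z \<notin> S) (\<sigma> x)))" for S
  have "finite X" "card X = N choose s"
    unfolding X_def N_def using n_subsets[OF A] A by auto
  then have "0 < card X"
    using s unfolding N_def by simp
  have "sum g X = (\<Sum>x\<in>A. \<Sum>S\<in>X. length (takeWhile (\<lambda>z. z \<notin> S) (\<sigma> x)))"
    unfolding g_def by (rule sum.swap)
  also have "\<dots> = (\<Sum>x\<in>A. N choose Suc s)"
  proof (rule sum.cong[OF refl])
    fix x
    assume "x \<in> A"
    then have "distinct (\<sigma> x)" "set (\<sigma> x) = A" "length (\<sigma> x) = N"
      using \<sigma> distinct_card unfolding N_def by metis+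
    then show "(\<Sum>S\<in>X. length (takeWhile (\<lambda>z. z \<notin> S) (\<sigma> x))) = N choose Suc s"
      unfolding X_def using sum_length_takeWhile_not_in_subsets[of "\<sigma> x" s] by simp
  qed
  finally have "sum g X = N * (N choose Suc s)"
    unfolding N_def by simp
  moreover obtain S where "S \<in> X" "card X * g S \<le> sum g X"
    using exists_card_mult_le_sum[OF \<open>finite X\<close>] \<open>0 < card X\<close> by fastforce
  ultimately have "(N choose s) * (Suc s * g S) \<le> N * (Suc s * (N choose Suc s))"
    using \<open>card X = N choose s\<close> by (metis mult.left_commute mult_le_mono2)
  also have "\<dots> \<le> N * (N * (N choose s))"
    by (intro mult_left_mono Suc_mult_choose_Suc_le) simp
  finally have "Suc s * g S \<le> N ^ 2"
    using \<open>0 < card X\<close> \<open>card X = N choose s\<close> by (simp add: power2_eq_square mult.left_commute)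
  then show ?thesis
    using \<open>S \<in> X\<close> unfolding X_def g_def N_def by blast
qed

lemma sorted_takeWhile_witness:
  assumes "sorted (map f \<sigma>)" "y \<in> set \<sigma>" "y \<notin> set (takeWhile P \<sigma>)"
  shows "\<exists>z\<in>set \<sigma>. \<not> P z \<and> f z \<le> f y"
  using assms
proof (induction \<sigma>)
  case (Cons a \<sigma>)
  then show ?case
    by (cases "P a") (auto split: if_splits)
qed simp


section \<open>The construction\<close>

definition sorted_by :: "('a \<Rightarrow> 'b::linorder) \<Rightarrow> 'a::linorder set \<Rightarrow> 'a list" where
  "sorted_by f A = sort_key f (sorted_list_of_set A)"

lemma sorted_by: "finite A \<Longrightarrow> distinct (sorted_by f A) \<and> set (sorted_by f A) = A \<and> sorted (map f (sorted_by f A))"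
  unfolding sorted_by_def by simp

definition prefix_cost :: "('a \<Rightarrow> 'a \<Rightarrow> 'b::linorder) \<Rightarrow> 'a::linorder set \<Rightarrow> 'a set \<Rightarrow> nat" where
  "prefix_cost key A S = (\<Sum>x\<in>A. length (takeWhile (\<lambda>z. z \<notin> S) (sorted_by (key x) A)))"

definition sample :: "('a \<Rightarrow> 'a \<Rightarrow> 'b::linorder) \<Rightarrow> nat \<Rightarrow> 'a::linorder set \<Rightarrow> 'a set" where
  "sample key s A = (SOME S. S \<subseteq> A \<and> card S = s \<and> Suc s * prefix_cost key A S \<le> card A ^ 2)"

lemma sample:
  assumes "finite A" "s \<le> card A"
  shows "sample key s A \<subseteq> A \<and> card (sample key s A) = s \<and>
    Suc s * prefix_cost key A (sample key s A) \<le> card A ^ 2"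
proof -
  have "\<exists>S\<subseteq>A. card S = s \<and> Suc s * prefix_cost key A S \<le> card A ^ 2"
    using exists_subset_short_prefixes[OF assms, of "\<lambda>x. sorted_by (key x) A"] sorted_by[OF assms(1)]
    unfolding prefix_cost_def by blast
  then show ?thesis
    unfolding sample_def by (rule someI_ex)
qed

primrec levels :: "('a \<Rightarrow> 'a \<Rightarrow> 'b::linorder) \<Rightarrow> (nat \<Rightarrow> nat) \<Rightarrow> 'a::linorder set \<Rightarrow> nat \<Rightarrow> 'a set" where
  "levels key c V 0 = V"
| "levels key c V (Suc i) = sample key (c (Suc i)) (levels key c V i)"

lemma levels:
  assumes "finite V" "card V = c 0" "\<And>i. c (Suc i) \<le> c i"
  shows "levels key c V i \<subseteq> V" "card (levels key c V i) = c i"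
    and "Suc (c (Suc i)) * prefix_cost key (levels key c V i) (levels key c V (Suc i)) \<le> c i ^ 2"
proof -
  have *: "levels key c V i \<subseteq> V \<and> card (levels key c V i) = c i" for i
  proof (induction i)
    case (Suc i)
    then have "finite (levels key c V i)"
      using assms(1) finite_subset by blast
    then show ?case
      using Suc sample[of "levels key c V i" "c (Suc i)" key] assms(3)[of i] by auto
  qed (use assms in simp)
  then show "levels key c V i \<subseteq> V" "card (levels key c V i) = c i"
    by blast+
  have "finite (levels key c V i)"
    using * assms(1) finite_subset by blast
  then show "Suc (c (Suc i)) * prefix_cost key (levels key c V i) (levels key c V (Suc i)) \<le> c i ^ 2"
    using sample[of "levels key c V i" "c (Suc i)" key] * assms(3)[of i] by auto
qed

definition pivot :: "'a set set \<Rightarrow> ('a set \<Rightarrow> real) \<Rightarrow> 'a set \<Rightarrow> 'a \<Rightarrow> 'a" where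
  "pivot E w B u = arg_min_on (graph_dist E w u) B"

definition bunch :: "'a set set \<Rightarrow> ('a set \<Rightarrow> real) \<Rightarrow> (nat \<Rightarrow> 'a::linorder set) \<Rightarrow> nat \<Rightarrow> 'a \<Rightarrow> 'a set" where
  "bunch E w A i x = set (takeWhile (\<lambda>z. z \<notin> A (Suc i)) (sorted_by (graph_dist E w x) (A i)))"

definition bunch_edges :: "'a set set \<Rightarrow> ('a set \<Rightarrow> real) \<Rightarrow> nat \<Rightarrow> (nat \<Rightarrow> 'a::linorder set) \<Rightarrow> 'a set set" where
  "bunch_edges E w k A =
    {{x, y} | x y. \<exists>i<k. x \<in> A i \<and> y \<in> bunch E w A i x \<and> x \<noteq> y \<and> graph_dist E w x y < \<infinity>}"

definition pivot_edges :: "'a set \<Rightarrow> 'a set set \<Rightarrow> ('a set \<Rightarrow> real) \<Rightarrow> nat \<Rightarrow> (nat \<Rightarrow> 'a set) \<Rightarrow> 'a set set" where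
  "pivot_edges V E w k A =
    {{u, pivot E w (A j) u} | u j. u \<in> V \<and> j < k \<and> u \<noteq> pivot E w (A j) u \<and>
      graph_dist E w u (pivot E w (A j) u) < \<infinity>}"

definition dist_weight :: "'a set set \<Rightarrow> ('a set \<Rightarrow> real) \<Rightarrow> 'a::linorder set \<Rightarrow> real" where
  "dist_weight E w e = real_of_ereal (graph_dist E w (Min e) (Max e))"

lemma dist_weight_doubleton: "dist_weight E w {x, y} = real_of_ereal (graph_dist E w x y)"
  unfolding dist_weight_def by (cases "x \<le> y") (auto simp: max_def min_def graph_dist_commute)

context
  fixes V :: "'a::linorder set" and E :: "'a set set" and w :: "'a set \<Rightarrow> real"
    and k :: nat and A :: "nat \<Rightarrow> 'a set"
  assumes finite_V: "finite V" and levels_subset: "\<And>i. A i \<subseteq> V" and levels_nonempty: "\<And>i. i < k \<Longrightarrow> A i \<noteq> {}"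
begin

lemma finite_level: "finite (A i)"
  using finite_V levels_subset finite_subset by blast

lemma pivot_mem: "j < k \<Longrightarrow> pivot E w (A j) u \<in> A j"
  unfolding pivot_def using arg_min_if_finite(1)[OF finite_level levels_nonempty] .

lemma pivot_nearest: "j < k \<Longrightarrow> z \<in> A j \<Longrightarrow> graph_dist E w u (pivot E w (A j) u) \<le> graph_dist E w u z"
  unfolding pivot_def using arg_min_least[OF finite_level levels_nonempty] .

lemma shortcut_endpoints:
  assumes "e \<in> bunch_edges E w k A \<union> pivot_edges V E w k A"
  shows "\<exists>x y. e = {x, y} \<and> x \<in> V \<and> y \<in> V \<and> x \<noteq> y \<and> graph_dist E w x y < \<infinity>"
  using assms
proof
  assume "e \<in> bunch_edges E w k A"
  then obtain x y i where "e = {x, y}" "i < k" "x \<in> A i" "y \<in> bunch E w A i x" "x \<noteq> y"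
    "graph_dist E w x y < \<infinity>"
    unfolding bunch_edges_def by blast
  moreover from this have "y \<in> A i"
    unfolding bunch_def using sorted_by[OF finite_level] by (metis set_takeWhileD)
  ultimately show ?thesis
    using levels_subset by blast
next
  assume "e \<in> pivot_edges V E w k A"
  then show ?thesis
    unfolding pivot_edges_def using pivot_mem levels_subset by blast
qed

lemma pivot_hierarchy_of_levels:
  assumes "E \<subseteq> edges_on V" "\<forall>e\<in>E. 0 < w e" "A 0 = V" "A k = {}"
  shows "pivot_hierarchy V E w (bunch_edges E w k A \<union> pivot_edges V E w k A) (dist_weight E w) k A
    (\<lambda>j. pivot E w (A j))"
proof
  let ?H = "bunch_edges E w k A \<union> pivot_edges V E w k A"
  show "?H \<subseteq> edges_on V"
    using shortcut_endpoints unfolding edges_on_def by blast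
  show "graph_dist E w x y < \<infinity> \<and> ereal (dist_weight E w {x, y}) = graph_dist E w x y"
    if xy: "{x, y} \<in> ?H" for x y
  proof -
    obtain x' y' where "{x, y} = {x', y'}" "graph_dist E w x' y' < \<infinity>"
      using shortcut_endpoints[OF xy] by blast
    then have "graph_dist E w x y < \<infinity>"
      by (metis doubleton_eq_iff graph_dist_commute)
    moreover have "0 \<le> graph_dist E w x y"
      using graph_dist_nonneg assms(2) by (metis less_imp_le)
    ultimately show ?thesis
      by (simp add: dist_weight_doubleton ereal_real)
  qed
  show "u = pivot E w (A j) u \<or> {u, pivot E w (A j) u} \<in> ?H \<or> graph_dist E w u (pivot E w (A j) u) = \<infinity>"
    if "u \<in> V" "j < k" for u j
    using that unfolding pivot_edges_def by (auto simp: less_top[symmetric])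
  show "x = y \<or> {x, y} \<in> ?H \<or>
      (Suc i < k \<and> graph_dist E w x (pivot E w (A (Suc i)) x) \<le> graph_dist E w x y)"
    if xy: "i < k" "x \<in> A i" "y \<in> A i" "graph_dist E w x y < \<infinity>" for i x y
  proof (cases "y \<in> bunch E w A i x")
    case True
    then show ?thesis
      unfolding bunch_edges_def using xy by blast
  next
    case False
    moreover have "sorted (map (graph_dist E w x) (sorted_by (graph_dist E w x) (A i)))"
      "y \<in> set (sorted_by (graph_dist E w x) (A i))"
      using sorted_by[OF finite_level] xy(3) by auto
    ultimately obtain z where "z \<in> A (Suc i)" "graph_dist E w x z \<le> graph_dist E w x y"
      using sorted_takeWhile_witness[of "graph_dist E w x" _ y "\<lambda>z. z \<notin> A (Suc i)"]
      unfolding bunch_def by blast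
    moreover from this(1) have "Suc i < k"
      using assms(4) xy(1) by (metis Suc_lessI empty_iff)
    ultimately show ?thesis
      using pivot_nearest order_trans by blast
  qed
qed (use assms pivot_mem pivot_nearest in auto)

lemma card_shortcuts_le:
  "card (bunch_edges E w k A \<union> pivot_edges V E w k A) \<le>
    (\<Sum>i<k. prefix_cost (graph_dist E w) (A i) (A (Suc i))) + card V * k"
proof -
  have "bunch_edges E w k A \<subseteq> (\<Union>i<k. \<Union>x\<in>A i. (\<lambda>y. {x, y}) ` bunch E w A i x)"
    unfolding bunch_edges_def by blast
  then have "card (bunch_edges E w k A) \<le> card (\<Union>i<k. \<Union>x\<in>A i. (\<lambda>y. {x, y}) ` bunch E w A i x)"
    by (rule card_mono[rotated]) (simp add: finite_level bunch_def)
  also have "\<dots> \<le> (\<Sum>i<k. \<Sum>x\<in>A i. card ((\<lambda>y. {x, y}) ` bunch E w A i x))"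
    by (intro order_trans[OF card_UN_le] sum_mono card_UN_le finite_level) simp
  also have "\<dots> \<le> (\<Sum>i<k. prefix_cost (graph_dist E w) (A i) (A (Suc i)))"
    unfolding prefix_cost_def bunch_def
    by (intro sum_mono order_trans[OF card_image_le card_length]) simp
  finally have bunches: "card (bunch_edges E w k A) \<le> (\<Sum>i<k. prefix_cost (graph_dist E w) (A i) (A (Suc i)))" .
  have "pivot_edges V E w k A \<subseteq> (\<lambda>(u, j). {u, pivot E w (A j) u}) ` (V \<times> {..<k})"
    unfolding pivot_edges_def by force
  then have "card (pivot_edges V E w k A) \<le> card (V \<times> {..<k})"
    by (meson card_image_le card_mono finite_SigmaI finite_V finite_imageI finite_lessThan order_trans)
  then show ?thesis
    using bunches card_Un_le[of "bunch_edges E w k A" "pivot_edges V E w k A"]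
    by (simp add: card_cartesian_product)
qed

end


section \<open>Level sizes\<close>

text \<open>With \<open>a = level_exp k\<close> we have \<open>2 * a i = (1 + 1 / (2 ^ k - 1)) + a (Suc i)\<close> and \<open>a k = 0\<close>,
  so the square of the size of a level is the target density times the size of the next one.
  Levels from \<open>k\<close> on are empty, so the bunches of the last level are the whole level.\<close>

definition level_exp :: "nat \<Rightarrow> nat \<Rightarrow> real" where
  "level_exp k i = 1 - (2 ^ i - 1) / (2 ^ k - 1)"

definition level_size :: "nat \<Rightarrow> nat \<Rightarrow> nat \<Rightarrow> nat" where
  "level_size n k i = (if i < k then nat \<lceil>real n powr level_exp k i\<rceil> else 0)"

lemma level_exp_0 [simp]: "level_exp k 0 = 1"
  by (simp add: level_exp_def)

lemma one_le_two_power_minus_one: "1 \<le> k \<Longrightarrow> (1::real) \<le> 2 ^ k - 1"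
  using power_increasing[of 1 k "2::real"] by simp

lemma level_exp_self: "1 \<le> k \<Longrightarrow> level_exp k k = 0"
  using one_le_two_power_minus_one[of k] by (simp add: level_exp_def)

lemma level_exp_Suc_le: "level_exp k (Suc i) \<le> level_exp k i"
  unfolding level_exp_def by (simp add: divide_right_mono)

lemma level_exp_nonneg: "i \<le> k \<Longrightarrow> 0 \<le> level_exp k i"
proof (cases "k = 0")
  case False
  assume "i \<le> k"
  then have "(2::real) ^ i - 1 \<le> 2 ^ k - 1"
    by (simp add: power_increasing)
  with False show ?thesis
    unfolding level_exp_def using one_le_two_power_minus_one[of k] by (simp add: divide_le_eq_1_pos)
qed (simp add: level_exp_def)

lemma level_exp_double: "1 \<le> k \<Longrightarrow> 2 * level_exp k i = (1 + 1 / (2 ^ k - 1)) + level_exp k (Suc i)"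
proof -
  assume "1 \<le> k"
  define M :: real where "M = 2 ^ k - 1"
  have "1 \<le> M"
    unfolding M_def using one_le_two_power_minus_one[OF \<open>1 \<le> k\<close>] .
  then show ?thesis
    unfolding level_exp_def M_def[symmetric] by (simp add: field_simps)
qed

lemma nat_ceiling_le_double: "1 \<le> x \<Longrightarrow> real (nat \<lceil>x\<rceil>) \<le> 2 * x"
  by linarith

context
  fixes n k :: nat
  assumes n: "1 \<le> n" and k: "1 \<le> k"
begin

lemma level_size_0: "level_size n k 0 = n"
  using k by (simp add: level_size_def)

lemma level_size_Suc_le: "level_size n k (Suc i) \<le> level_size n k i"
proof (cases "Suc i < k")
  case True
  have "real n powr level_exp k (Suc i) \<le> real n powr level_exp k i"
    using n level_exp_Suc_le[of k i] by (intro powr_mono) auto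
  then have "nat \<lceil>real n powr level_exp k (Suc i)\<rceil> \<le> nat \<lceil>real n powr level_exp k i\<rceil>"
    by (intro nat_mono ceiling_mono)
  then show ?thesis
    unfolding level_size_def using True by simp
qed (simp add: level_size_def)

lemma level_size_pos: "i < k \<Longrightarrow> 1 \<le> level_size n k i"
proof -
  assume "i < k"
  then have "1 \<le> real n powr level_exp k i"
    using n level_exp_nonneg[of i k] by (simp add: ge_one_powr_ge_zero)
  then show ?thesis
    using \<open>i < k\<close> n unfolding level_size_def by (simp add: le_nat_iff)
qed

lemma level_size_square_le:
  assumes "i < k"
  shows "real (level_size n k i) ^ 2 \<le> 4 * real n powr (1 + 1 / (2 ^ k - 1)) * real (Suc (level_size n k (Suc i)))"
proof -
  have "1 \<le> real n powr level_exp k i"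
    using n level_exp_nonneg[of i k] assms by (simp add: ge_one_powr_ge_zero)
  then have "real (level_size n k i) \<le> 2 * real n powr level_exp k i"
    unfolding level_size_def using assms nat_ceiling_le_double by simp
  then have "real (level_size n k i) ^ 2 \<le> (2 * real n powr level_exp k i) ^ 2"
    by (rule power_mono) simp
  also have "\<dots> = 4 * real n powr (2 * level_exp k i)"
    by (simp add: power2_eq_square powr_add[symmetric])
  also have "\<dots> = 4 * real n powr (1 + 1 / (2 ^ k - 1)) * real n powr level_exp k (Suc i)"
    by (simp only: level_exp_double[OF k] powr_add mult.assoc)
  also have "\<dots> \<le> 4 * real n powr (1 + 1 / (2 ^ k - 1)) * real (Suc (level_size n k (Suc i)))"
  proof (intro mult_left_mono)
    show "real n powr level_exp k (Suc i) \<le> real (Suc (level_size n k (Suc i)))"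
    proof (cases "Suc i < k")
      case True
      then show ?thesis
        unfolding level_size_def by simp linarith
    next
      case False
      then have "Suc i = k"
        using assms by simp
      then show ?thesis
        using level_exp_self[OF k] n by simp
    qed
  qed simp
  finally show ?thesis .
qed


lemma levels_level_size:
  assumes "finite V" "card V = n"
  shows "levels key (level_size n k) V i \<subseteq> V" "card (levels key (level_size n k) V i) = level_size n k i"
    and "Suc (level_size n k (Suc i)) * prefix_cost key (levels key (level_size n k) V i) (levels key (level_size n k) V (Suc i))
      \<le> level_size n k i ^ 2"
proof -
  have "card V = level_size n k 0"
    using assms(2) level_size_0 by simp
  from levels[OF assms(1) this level_size_Suc_le]
  show "levels key (level_size n k) V i \<subseteq> V" "card (levels key (level_size n k) V i) = level_size n k i"
    and "Suc (level_size n k (Suc i)) * prefix_cost key (levels key (level_size n k) V i) (levels key (level_size n k) V (Suc i))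
      \<le> level_size n k i ^ 2" .
qed

lemma prefix_cost_levels_le:
  assumes "finite V" "card V = n" "i < k"
  shows "real (prefix_cost key (levels key (level_size n k) V i) (levels key (level_size n k) V (Suc i)))
    \<le> 4 * real n powr (1 + 1 / (2 ^ k - 1))"
proof -
  let ?s = "Suc (level_size n k (Suc i))"
    and ?cost = "prefix_cost key (levels key (level_size n k) V i) (levels key (level_size n k) V (Suc i))"
  have "real (?s * ?cost) \<le> real (level_size n k i ^ 2)"
    using levels_level_size(3)[OF assms(1,2)] by (simp only: of_nat_le_iff)
  also have "\<dots> \<le> real ?s * (4 * real n powr (1 + 1 / (2 ^ k - 1)))"
    using level_size_square_le[OF assms(3)] by (simp add: mult.commute)
  finally have "real ?s * real ?cost \<le> real ?s * (4 * real n powr (1 + 1 / (2 ^ k - 1)))"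
    by (simp only: of_nat_mult)
  then show ?thesis
    by (rule mult_left_le_imp_le) simp
qed
end


context
  fixes n k :: nat and V :: "'a::linorder set"
  assumes n: "1 \<le> n" and k: "1 \<le> k" and V: "finite V" "card V = n"
begin

lemma levels_hierarchy:
  fixes key :: "'a \<Rightarrow> 'a \<Rightarrow> 'b::linorder"
  defines "A \<equiv> levels key (level_size n k) V"
  shows "A 0 = V" "A k = {}" "\<And>i. A i \<subseteq> V" "\<And>i. i < k \<Longrightarrow> A i \<noteq> {}"
proof -
  note A = levels_level_size[OF n k V, where key = key, folded A_def]
  show "A 0 = V"
    unfolding A_def by simp
  show "A i \<subseteq> V" for i
    by (rule A(1))
  have "finite (A i)" for i
    using A(1) V(1) finite_subset by blast
  then show "A k = {}"
    using A(2)[of k] by (simp add: level_size_def)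
  show "A i \<noteq> {}" if "i < k" for i
    using A(2)[of i] level_size_pos[OF n k that] by auto
qed

lemma card_level_shortcuts_le:
  fixes E :: "'a set set" and w :: "'a set \<Rightarrow> real"
  defines "A \<equiv> levels (graph_dist E w) (level_size n k) V"
  shows "real (card (bunch_edges E w k A \<union> pivot_edges V E w k A)) \<le> 5 * real k * real n powr (1 + 1 / (2 ^ k - 1))"
proof -
  let ?p = "1 + 1 / (2 ^ k - 1) :: real"
  have "real n \<le> real n powr ?p"
    using n powr_mono[of 1 ?p "real n"] by (simp add: k one_le_power)
  then have "real n * real k \<le> real n powr ?p * real k"
    by (rule mult_right_mono) simp
  moreover have "(\<Sum>i<k. real (prefix_cost (graph_dist E w) (A i) (A (Suc i)))) \<le> real k * (4 * real n powr ?p)"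
    using sum_mono[of "{..<k}", OF prefix_cost_levels_le[OF n k V]] unfolding A_def by simp
  moreover have "real (card (bunch_edges E w k A \<union> pivot_edges V E w k A))
      \<le> real ((\<Sum>i<k. prefix_cost (graph_dist E w) (A i) (A (Suc i))) + n * k)"
    using card_shortcuts_le[OF V(1) levels_hierarchy(3,4)[where key = "graph_dist E w"], where E = E and w = w] V(2)
    unfolding A_def by (simp only: of_nat_le_iff)
  ultimately show ?thesis
    by (simp add: algebra_simps)
qed

end

lemma exists_sparse_hopset:
  fixes V :: "'a::linorder set" and E :: "'a set set" and w :: "'a set \<Rightarrow> real"
  assumes V: "finite V" and E: "E \<subseteq> edges_on V" "\<forall>e\<in>E. 0 < w e" and k: "1 \<le> k"
  shows "\<exists>H wH. real (card H) \<le> 5 * real k * real (card V) powr (1 + 1 / (2 ^ k - 1)) \<and>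
    (\<forall>\<epsilon> \<beta>. 0 < \<epsilon> \<and> \<epsilon> < 1 \<and> (24 * real k / \<epsilon> + 9) ^ (k - 1) \<le> \<beta> \<longrightarrow> is_hopset V E w H wH \<beta> \<epsilon>)"
proof (cases "V = {}")
  case True
  then show ?thesis
    by (intro exI[of _ "{}"]) (simp add: is_hopset_def)
next
  case False
  then have n: "1 \<le> card V"
    using V by (simp add: Suc_le_eq card_gt_0_iff)
  define A where "A = levels (graph_dist E w) (level_size (card V) k) V"
  define H where "H = bunch_edges E w k A \<union> pivot_edges V E w k A"
  note A = levels_hierarchy[OF n k V refl, where key = "graph_dist E w", folded A_def]
  interpret pivot_hierarchy V E w H "dist_weight E w" k A "\<lambda>j. pivot E w (A j)"
    unfolding H_def using pivot_hierarchy_of_levels[OF V A(3,4) E A(1,2)] .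
  have "real (card H) \<le> 5 * real k * real (card V) powr (1 + 1 / (2 ^ k - 1))"
    unfolding H_def A_def by (rule card_level_shortcuts_le[OF n k V refl])
  with is_hopset k show ?thesis
    by (intro exI[of _ H] exI[of _ "dist_weight E w"]) blast
qed

theorem mainTheorem2:
  shows "\<exists>C > (0::real). \<forall>(V :: nat set) E w (k :: nat).
     finite V \<and> E \<subseteq> edges_on V \<and> (\<forall>e\<in>E. w e > 0) \<and> k \<ge> 1 \<longrightarrow>
     (\<exists>H wH. real (card H) \<le> C * real k * real (card V) powr (1 + 1 / (2 ^ k - 1)) \<and>
        (\<forall>\<epsilon>::real. 0 < \<epsilon> \<and> \<epsilon> < 1 \<longrightarrow>
           is_hopset V E w H wH ((C * real k / \<epsilon>) ^ (k - 1)) \<epsilon>))"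
proof (intro exI[of _ 33] conjI allI impI)
  fix V :: "nat set" and E :: "nat set set" and w :: "nat set \<Rightarrow> real" and k :: nat
  let ?p = "1 + 1 / (2 ^ k - 1) :: real"
  assume "finite V \<and> E \<subseteq> edges_on V \<and> (\<forall>e\<in>E. w e > 0) \<and> k \<ge> 1"
  then have V: "finite V" and E: "E \<subseteq> edges_on V" "\<forall>e\<in>E. 0 < w e" and k: "1 \<le> k"
    by auto
  obtain H wH where card: "real (card H) \<le> 5 * real k * real (card V) powr ?p"
    and hopset: "\<And>\<epsilon> \<beta>. 0 < \<epsilon> \<and> \<epsilon> < 1 \<and> (24 * real k / \<epsilon> + 9) ^ (k - 1) \<le> \<beta> \<Longrightarrow> is_hopset V E w H wH \<beta> \<epsilon>"
    using exists_sparse_hopset[OF V E k] by blast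
  have "real (card H) \<le> 33 * real k * real (card V) powr ?p"
    using card by (smt (verit) mult_right_mono of_nat_0_le_iff powr_ge_zero)
  moreover have "(24 * real k / \<epsilon> + 9) ^ (k - 1) \<le> (33 * real k / \<epsilon>) ^ (k - 1)" if "0 < \<epsilon>" "\<epsilon> < 1" for \<epsilon> :: real
    using that k by (intro power_mono) (auto simp: field_simps)
  ultimately show "\<exists>H wH. real (card H) \<le> 33 * real k * real (card V) powr ?p \<and>
      (\<forall>\<epsilon>::real. 0 < \<epsilon> \<and> \<epsilon> < 1 \<longrightarrow> is_hopset V E w H wH ((33 * real k / \<epsilon>) ^ (k - 1)) \<epsilon>)"
    using hopset by blast
qed simp

end
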